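(* Let $k\ge2$ and let $\alpha,\beta,\tau$ be the group formulas $\alpha(x)=\forall y\,([y^{-1}xy,x]=e)$, $\beta(y)=\forall x\,(\alpha(x)\rightarrow y^{-1}xy=x^k)$, and $\tau(x,y,h,b_1)=\alpha(x)\wedge\alpha(y)\wedge([h,b_1]=e)\wedge\beta(b_1)\wedge\forall v\,\forall w\,\big([v,b_1]=[w,b_1]=e\wedge\gamma(h,v,w,b_1)\rightarrow\exists u\,(\alpha(u)\wedge[v,y]=[w,x][v,[u,v]])\big)$, where $\gamma(x,y,z,t)$ is a group formula such that for every $b_1\in Ab$ and all $n,l,m\in\mathbb{Z}$, $BS(1,k)\models\gamma(b_1^n,b_1^l,b_1^m,b_1)$ iff $nl=m$. Then the formula $\pi(x)=\forall c\,\forall v\,\big(\alpha(c)\wedge\beta(v)\rightarrow\exists w\,\exists h\,([w,v]=e\wedge\tau(x,w^{-1}cw,h,v))\big)$ defines the set $A_1$ in $BS(1,k)$.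
   Context: $BS(1,k)=\langle a,b\mid b^{-1}ab=a^k\rangle$, identified with $\mathbb{Z}[1/k]\rtimes\mathbb{Z}$ (pairs $(y,m)$, $y\in\mathbb{Z}[1/k]=\{zk^i:z,i\in\mathbb{Z}\}$, product $(y_1,m_1)(y_2,m_2)=(y_1+y_2k^{-m_1},m_1+m_2)$), with $a=(1,0)$, $b=(0,1)$; $a^y=(y,0)$. $Ab=\{a^yb:y\in\mathbb{Z}[1/k]\}$ and $A_1=\{a^y: y\text{ a unit of }\mathbb{Z}[1/k]\}$. The commutator is $[x,y]=x^{-1}y^{-1}xy$. *)

theory Defs
  imports Complex_Main "HOL-Algebra.Group"
begin

definition Zk :: "int \<Rightarrow> rat set" where
  "Zk k = {of_int z * (of_int k) powi i | z i. True}"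

text \<open>BS(1,k) realised as Z[1/k] x Z with
  (y1,m1)(y2,m2) = (y1 + y2 k^(-m1), m1+m2).\<close>
definition BSG :: "int \<Rightarrow> (rat \<times> int) monoid" where
  "BSG k = \<lparr>carrier = Zk k \<times> UNIV,
            mult = (\<lambda>p q. (fst p + fst q * (of_int k) powi (- snd p), snd p + snd q)),
            one = (0, 0)\<rparr>"

definition aelt :: "rat \<Rightarrow> rat \<times> int" where "aelt y = (y, 0)"
definition belt :: "rat \<times> int" where "belt = (0, 1)"

definition Ab :: "int \<Rightarrow> (rat \<times> int) set" where
  "Ab k = {aelt y \<otimes>\<^bsub>BSG k\<^esub> belt | y. y \<in> Zk k}"

definition A1 :: "int \<Rightarrow> (rat \<times> int) set" where
  "A1 k = {aelt y | y. y \<in> Zk k \<and> (\<exists>z \<in> Zk k. y * z = 1)}"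

definition gcomm :: "('a, 'b) monoid_scheme \<Rightarrow> 'a \<Rightarrow> 'a \<Rightarrow> 'a" where
  "gcomm G x y = inv\<^bsub>G\<^esub> x \<otimes>\<^bsub>G\<^esub> inv\<^bsub>G\<^esub> y \<otimes>\<^bsub>G\<^esub> x \<otimes>\<^bsub>G\<^esub> y"

definition f_alpha :: "('a, 'b) monoid_scheme \<Rightarrow> 'a \<Rightarrow> bool" where
  "f_alpha G x = (\<forall>y \<in> carrier G. gcomm G (inv\<^bsub>G\<^esub> y \<otimes>\<^bsub>G\<^esub> x \<otimes>\<^bsub>G\<^esub> y) x = \<one>\<^bsub>G\<^esub>)"

definition f_beta :: "('a, 'b) monoid_scheme \<Rightarrow> int \<Rightarrow> 'a \<Rightarrow> bool" where
  "f_beta G k y = (\<forall>x \<in> carrier G. f_alpha G x \<longrightarrow>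
       inv\<^bsub>G\<^esub> y \<otimes>\<^bsub>G\<^esub> x \<otimes>\<^bsub>G\<^esub> y = x [^]\<^bsub>G\<^esub> k)"

definition f_tau :: "('a, 'b) monoid_scheme \<Rightarrow> int \<Rightarrow> ('a \<Rightarrow> 'a \<Rightarrow> 'a \<Rightarrow> 'a \<Rightarrow> bool)
                   \<Rightarrow> 'a \<Rightarrow> 'a \<Rightarrow> 'a \<Rightarrow> 'a \<Rightarrow> bool" where
  "f_tau G k \<gamma> x y h b1 =
     (f_alpha G x \<and> f_alpha G y \<and> gcomm G h b1 = \<one>\<^bsub>G\<^esub> \<and> f_beta G k b1 \<and>
      (\<forall>v \<in> carrier G. \<forall>w \<in> carrier G.
         gcomm G v b1 = \<one>\<^bsub>G\<^esub> \<and> gcomm G w b1 = \<one>\<^bsub>G\<^esub> \<and> \<gamma> h v w b1 \<longrightarrow>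
         (\<exists>u \<in> carrier G. f_alpha G u \<and>
            gcomm G v y = gcomm G w x \<otimes>\<^bsub>G\<^esub> gcomm G v (gcomm G u v))))"

definition f_pi :: "('a, 'b) monoid_scheme \<Rightarrow> int \<Rightarrow> ('a \<Rightarrow> 'a \<Rightarrow> 'a \<Rightarrow> 'a \<Rightarrow> bool)
                   \<Rightarrow> 'a \<Rightarrow> bool" where
  "f_pi G k \<gamma> x =
     (\<forall>c \<in> carrier G. \<forall>v \<in> carrier G. f_alpha G c \<and> f_beta G k v \<longrightarrow>
        (\<exists>w \<in> carrier G. \<exists>h \<in> carrier G. gcomm G w v = \<one>\<^bsub>G\<^esub> \<and>
           f_tau G k \<gamma> x (inv\<^bsub>G\<^esub> w \<otimes>\<^bsub>G\<^esub> c \<otimes>\<^bsub>G\<^esub> w) h v))"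

end

theory Submission
  imports Defs "HOL-Algebra.Elementary_Groups"
begin

text \<open>Write A for the normal subgroup Z[1/k] x {0} of BS(1,k) = Z[1/k] x Z. The formula alpha
  defines A, beta defines the coset A b of elements (y, 1), and the centraliser of such an element
  b1 is the cyclic group it generates. Conjugation by g multiplies A by k to the power snd g, so
  all commutators occurring in tau lie in the abelian group A. For x = (X, 0), y = (Y, 0),
  h = b1^n, v = b1^l, w = b1^(n l) and q = k^l the clause of tau therefore says that
  (q - 1)(Y - n X) is divisible by (q - 1)^2 in Z[1/k], because q^n = 1 + n (q - 1) modulo
  (q - 1)^2. As no nonzero element of Z[1/k] is divisible by all k^l - 1, tau(x, y, b1^n, b1)
  means exactly Y = n X. Conjugating c = (C, 0) by powers of v yields C k^i, so pi(x) says that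
  every C in Z[1/k] is an integer multiple of X up to a power of k, i.e. that X is a unit.\<close>

lemma power_int_inject_exp:
  fixes a :: "'a :: linordered_field"
  assumes "1 < a"
  shows "a powi m = a powi n \<longleftrightarrow> m = n"
  using assms power_int_strict_increasing[of m n a] power_int_strict_increasing[of n m a]
  by (cases m n rule: linorder_cases) auto

lemma Zk_iff: "y \<in> Zk k \<longleftrightarrow> (\<exists>z (n::nat). y = of_int z / of_int k ^ n)"
proof
  assume "y \<in> Zk k"
  then obtain z i where y: "y = of_int z * of_int k powi i"
    unfolding Zk_def by auto
  show "\<exists>z (n::nat). y = of_int z / of_int k ^ n"
  proof (cases "i \<ge> 0")
    case True
    then have "y = of_int (z * k ^ nat i) / of_int k ^ 0"
      using y by (simp add: power_int_def)
    then show ?thesis by blast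
  next
    case False
    then have "y = of_int z / of_int k ^ nat (- i)"
      using y by (simp add: power_int_def field_simps)
    then show ?thesis by blast
  qed
next
  assume "\<exists>z (n::nat). y = of_int z / of_int k ^ n"
  then obtain z and n :: nat where "y = of_int z / of_int k ^ n" by blast
  then have "y = of_int z * of_int k powi (- int n)"
    by (simp add: power_int_minus field_simps)
  then show "y \<in> Zk k" unfolding Zk_def by blast
qed

lemma Zk_of_int [simp]: "of_int z \<in> Zk k"
  unfolding Zk_def by (intro CollectI exI[of _ z] exI[of _ 0]) simp

lemma Zk_0 [simp]: "0 \<in> Zk k" and Zk_1 [simp]: "1 \<in> Zk k"
  using Zk_of_int[of 0 k] Zk_of_int[of 1 k] by simp_all

lemma Zk_power_int [simp]: "of_int k powi i \<in> Zk k"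
  unfolding Zk_def by (intro CollectI exI[of _ 1] exI[of _ i]) simp

lemma Zk_uminus: "x \<in> Zk k \<Longrightarrow> - x \<in> Zk k"
  unfolding Zk_def by (force intro: exI[of _ "- z" for z])

lemma Zk_mult: "x \<in> Zk k \<Longrightarrow> y \<in> Zk k \<Longrightarrow> x * y \<in> Zk k"
proof -
  assume "x \<in> Zk k" "y \<in> Zk k"
  then obtain z1 z2 and n1 n2 :: nat
    where "x = of_int z1 / of_int k ^ n1" "y = of_int z2 / of_int k ^ n2"
    unfolding Zk_iff by blast
  then have "x * y = of_int (z1 * z2) / of_int k ^ (n1 + n2)"
    by (simp add: power_add)
  then show ?thesis unfolding Zk_iff by blast
qed

lemma Zk_add:
  assumes "k \<noteq> 0" "x \<in> Zk k" "y \<in> Zk k"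
  shows "x + y \<in> Zk k"
proof -
  obtain z1 z2 and n1 n2 :: nat
    where x: "x = of_int z1 / of_int k ^ n1" and y: "y = of_int z2 / of_int k ^ n2"
    using assms(2,3) unfolding Zk_iff by blast
  from assms(1) have "x + y = of_int (z1 * k ^ n2 + z2 * k ^ n1) / of_int k ^ (n1 + n2)"
    unfolding x y by (simp add: field_simps power_add)
  then show ?thesis unfolding Zk_iff by blast
qed

lemma Zk_diff: "k \<noteq> 0 \<Longrightarrow> x \<in> Zk k \<Longrightarrow> y \<in> Zk k \<Longrightarrow> x - y \<in> Zk k"
  using Zk_add[of k x "- y"] Zk_uminus[of y k] by simp

lemma Zk_unit_power_int_expansion:
  assumes "k \<noteq> 0" and q: "q \<in> Zk k" "q \<noteq> 0" "inverse q \<in> Zk k"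
  shows "\<exists>Q \<in> Zk k. q powi n = 1 + (q - 1) * (of_int n + (q - 1) * Q)"
proof (induction n rule: int_induct[where k = 0])
  case base
  show ?case by (rule bexI[of _ 0]) simp_all
next
  case (step1 i)
  then obtain Q where "Q \<in> Zk k" and Q: "q powi i = 1 + (q - 1) * (of_int i + (q - 1) * Q)"
    by blast
  have "q powi (i + 1) = 1 + (q - 1) * (of_int (i + 1) + (q - 1) * (of_int i + q * Q))"
    using q(2) by (simp add: power_int_add Q algebra_simps)
  moreover have "of_int i + q * Q \<in> Zk k"
    using Zk_add Zk_mult \<open>Q \<in> Zk k\<close> assms(1) q(1) by simp
  ultimately show ?case by blast
next
  case (step2 i)
  then obtain Q where "Q \<in> Zk k" and Q: "q powi i = 1 + (q - 1) * (of_int i + (q - 1) * Q)"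
    by blast
  have "q powi (i - 1) = q powi i * inverse q"
    using q(2) by (simp add: power_int_diff field_simps)
  also have "\<dots> = 1 + (q - 1) * (of_int (i - 1) + (q - 1) * ((Q - of_int (i - 1)) * inverse q))"
    using q(2) unfolding Q by (simp add: field_simps)
  finally show ?case
    using Zk_mult[OF Zk_diff[OF assms(1) \<open>Q \<in> Zk k\<close> Zk_of_int] q(3)] by blast
qed

lemma Zk_eq_0_if_divisible_by_all_pow_minus_1:
  assumes k: "2 \<le> k" and "D \<in> Zk k"
    and dvd: "\<And>l::nat. 1 \<le> l \<Longrightarrow> \<exists>U \<in> Zk k. D = (of_int k ^ l - 1) * U"
  shows "D = 0"
proof (rule ccontr)
  assume "D \<noteq> 0"
  obtain d and e :: nat where D: "D = of_int d / of_int k ^ e"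
    using \<open>D \<in> Zk k\<close> unfolding Zk_iff by blast
  with \<open>D \<noteq> 0\<close> have "d \<noteq> 0" by auto
  define l where "l = nat \<bar>d\<bar> + 1"
  obtain U where "U \<in> Zk k" and U: "D = (of_int k ^ l - 1) * U"
    using dvd[of l] unfolding l_def by auto
  obtain u and f :: nat where u: "U = of_int u / of_int k ^ f"
    using \<open>U \<in> Zk k\<close> unfolding Zk_iff by blast
  have "of_int (d * k ^ f) = (of_int ((k ^ l - 1) * u * k ^ e) :: rat)"
    using U k unfolding D u by (simp add: field_simps)
  then have "(k ^ l - 1) dvd d * k ^ f"
    unfolding of_int_eq_iff by simp
  moreover have "coprime (k ^ l - 1) (k ^ f)"
    using coprime_diff_one_left[of "k ^ l"] by (simp add: l_def)
  ultimately have "(k ^ l - 1) dvd d"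
    using coprime_dvd_mult_left_iff by blast
  then have "\<bar>k ^ l - 1\<bar> \<le> \<bar>d\<bar>"
    using dvd_imp_le_int \<open>d \<noteq> 0\<close> by blast
  moreover have "int l < 2 ^ l"
    by (metis less_exp of_nat_less_iff of_nat_numeral of_nat_power)
  moreover have "(2::int) ^ l \<le> k ^ l"
    using k by (intro power_mono) auto
  ultimately show False
    unfolding l_def by linarith
qed

lemma Zk_unit_iff_multiples:
  assumes "k \<noteq> 0" "X \<in> Zk k"
  shows "(\<exists>Z \<in> Zk k. X * Z = 1) \<longleftrightarrow> (\<forall>C \<in> Zk k. \<exists>i n. C * of_int k powi i = of_int n * X)"
proof
  assume "\<exists>Z \<in> Zk k. X * Z = 1"
  then obtain Z where "Z \<in> Zk k" "X * Z = 1" by blast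
  show "\<forall>C \<in> Zk k. \<exists>i n. C * of_int k powi i = of_int n * X"
  proof
    fix C assume "C \<in> Zk k"
    then obtain n j where CZ: "C * Z = of_int n * of_int k powi j"
      using Zk_mult[OF _ \<open>Z \<in> Zk k\<close>] unfolding Zk_def by blast
    have "C * of_int k powi (- j) = C * Z * X * of_int k powi (- j)"
      using \<open>X * Z = 1\<close> by (simp add: algebra_simps)
    also have "\<dots> = of_int n * X"
      using assms(1) unfolding CZ by (simp add: power_int_minus field_simps)
    finally show "\<exists>i n. C * of_int k powi i = of_int n * X" by blast
  qed
next
  assume "\<forall>C \<in> Zk k. \<exists>i n. C * of_int k powi i = of_int n * X"
  then obtain i n where "of_int k powi i = of_int n * X"
    using Zk_1 by fastforce
  then have "X * (of_int n * of_int k powi (- i)) = of_int k powi i * of_int k powi (- i)"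
    by (simp add: algebra_simps)
  also have "\<dots> = 1"
    using assms(1) by (simp add: power_int_minus)
  finally have "X * (of_int n * of_int k powi (- i)) = 1" .
  moreover have "of_int n * of_int k powi (- i) \<in> Zk k"
    by (simp add: Zk_mult)
  ultimately show "\<exists>Z \<in> Zk k. X * Z = 1" by blast
qed

lemma BSG_mult: "p \<otimes>\<^bsub>BSG k\<^esub> q = (fst p + fst q * of_int k powi (- snd p), snd p + snd q)"
  by (simp add: BSG_def)

lemma BSG_one: "\<one>\<^bsub>BSG k\<^esub> = (0, 0)"
  by (simp add: BSG_def)

lemma BSG_carrier: "p \<in> carrier (BSG k) \<longleftrightarrow> fst p \<in> Zk k"
  by (cases p) (simp add: BSG_def)

lemma BSG_group:
  assumes "k \<noteq> 0"
  shows "group (BSG k)"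
proof (rule groupI)
  fix x y z
  show "x \<otimes>\<^bsub>BSG k\<^esub> y \<otimes>\<^bsub>BSG k\<^esub> z = x \<otimes>\<^bsub>BSG k\<^esub> (y \<otimes>\<^bsub>BSG k\<^esub> z)"
    using assms power_int_add[of "of_int k :: rat" "- snd x" "- snd y"]
    by (simp add: BSG_mult algebra_simps)
next
  fix x y
  assume "x \<in> carrier (BSG k)" "y \<in> carrier (BSG k)"
  then show "x \<otimes>\<^bsub>BSG k\<^esub> y \<in> carrier (BSG k)"
    using assms by (simp add: BSG_mult BSG_carrier Zk_add Zk_mult)
next
  fix x
  assume "x \<in> carrier (BSG k)"
  then have "(- fst x * of_int k powi snd x, - snd x) \<in> carrier (BSG k)"
    by (simp add: BSG_carrier Zk_uminus Zk_mult)
  moreover have "(- fst x * of_int k powi snd x, - snd x) \<otimes>\<^bsub>BSG k\<^esub> x = \<one>\<^bsub>BSG k\<^esub>"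
    using assms by (simp add: BSG_mult BSG_one power_int_minus)
  ultimately show "\<exists>y \<in> carrier (BSG k). y \<otimes>\<^bsub>BSG k\<^esub> x = \<one>\<^bsub>BSG k\<^esub>" by blast
qed (simp_all add: BSG_mult BSG_one BSG_carrier)

lemma (in group) gcomm_eq_one_iff:
  assumes "x \<in> carrier G" "y \<in> carrier G"
  shows "gcomm G x y = \<one> \<longleftrightarrow> x \<otimes> y = y \<otimes> x"
proof -
  have "gcomm G x y = inv (y \<otimes> x) \<otimes> (x \<otimes> y)"
    unfolding gcomm_def using assms by (simp add: inv_mult_group m_assoc)
  then show ?thesis
    using assms by (metis inv_closed inv_equality inv_inv m_closed r_inv)
qed

locale baumslag_solitar =
  fixes k :: int
  assumes two_le_k: "2 \<le> k"
begin

sublocale group "BSG k"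
  using BSG_group two_le_k by simp

lemma one_less_k: "(1::rat) < of_int k"
  using two_le_k by simp

lemma BSG_inv:
  assumes "x \<in> carrier (BSG k)"
  shows "inv\<^bsub>BSG k\<^esub> x = (- fst x * of_int k powi snd x, - snd x)"
proof (rule inv_equality)
  show "(- fst x * of_int k powi snd x, - snd x) \<otimes>\<^bsub>BSG k\<^esub> x = \<one>\<^bsub>BSG k\<^esub>"
    using one_less_k by (simp add: BSG_mult BSG_one power_int_minus)
qed (use assms in \<open>simp_all add: BSG_carrier Zk_uminus Zk_mult\<close>)

lemma snd_int_pow:
  assumes "x \<in> carrier (BSG k)"
  shows "snd (x [^]\<^bsub>BSG k\<^esub> (n::int)) = n * snd x"
proof -
  have "snd \<in> hom (BSG k) integer_group"
    by (rule homI) (simp_all add: BSG_mult)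
  then show ?thesis
    using hom_int_pow[of snd "BSG k" integer_group x n] assms group_axioms by simp
qed

lemma A_int_pow:
  assumes "t \<in> Zk k"
  shows "(t, 0) [^]\<^bsub>BSG k\<^esub> (n::int) = (of_int n * t, 0)"
proof -
  have nat_pow: "(t, 0) [^]\<^bsub>BSG k\<^esub> (m::nat) = (of_nat m * t, 0)" for m
    by (induction m) (simp_all add: BSG_mult BSG_one algebra_simps)
  have "(t, 0) \<in> carrier (BSG k)" "(of_nat m * t, 0) \<in> carrier (BSG k)" for m
    using assms Zk_mult[OF Zk_of_int[of "int m"] assms] by (simp_all add: BSG_carrier)
  then show ?thesis
    by (cases n rule: int_cases2) (simp_all add: int_pow_int int_pow_neg_int nat_pow BSG_inv)
qed

lemma conj_A:
  assumes "g \<in> carrier (BSG k)"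
  shows "inv\<^bsub>BSG k\<^esub> g \<otimes>\<^bsub>BSG k\<^esub> (t, 0) \<otimes>\<^bsub>BSG k\<^esub> g = (t * of_int k powi snd g, 0)"
  using one_less_k by (simp add: BSG_inv[OF assms] BSG_mult)

lemma gcomm_A_right:
  assumes "g \<in> carrier (BSG k)" "t \<in> Zk k"
  shows "gcomm (BSG k) g (t, 0) = (t * (1 - of_int k powi snd g), 0)"
proof -
  have "gcomm (BSG k) g (t, 0)
      = inv\<^bsub>BSG k\<^esub> g \<otimes>\<^bsub>BSG k\<^esub> (- t, 0) \<otimes>\<^bsub>BSG k\<^esub> g \<otimes>\<^bsub>BSG k\<^esub> (t, 0)"
    unfolding gcomm_def using assms(2) by (simp add: BSG_inv BSG_carrier)
  then show ?thesis
    unfolding conj_A[OF assms(1)] by (simp add: BSG_mult algebra_simps)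
qed

lemma gcomm_A_left:
  assumes "g \<in> carrier (BSG k)" "t \<in> Zk k"
  shows "gcomm (BSG k) (t, 0) g = (t * (of_int k powi snd g - 1), 0)"
proof -
  have A: "(t, 0) \<in> carrier (BSG k)" "(- t, 0) \<in> carrier (BSG k)"
    using assms(2) by (simp_all add: BSG_carrier Zk_uminus)
  have "gcomm (BSG k) (t, 0) g
      = (- t, 0) \<otimes>\<^bsub>BSG k\<^esub> (inv\<^bsub>BSG k\<^esub> g \<otimes>\<^bsub>BSG k\<^esub> (t, 0) \<otimes>\<^bsub>BSG k\<^esub> g)"
    unfolding gcomm_def using A assms(1) by (simp add: BSG_inv[of "(t, 0)"] m_assoc)
  then show ?thesis
    unfolding conj_A[OF assms(1)] by (simp add: BSG_mult algebra_simps)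
qed

lemma f_alpha_iff:
  assumes "x \<in> carrier (BSG k)"
  shows "f_alpha (BSG k) x \<longleftrightarrow> snd x = 0"
proof
  assume "f_alpha (BSG k) x"
  have one: "(1, 0) \<in> carrier (BSG k)"
    by (simp add: BSG_carrier)
  define c where "c = inv\<^bsub>BSG k\<^esub> (1, 0) \<otimes>\<^bsub>BSG k\<^esub> x \<otimes>\<^bsub>BSG k\<^esub> (1, 0)"
  have "gcomm (BSG k) c x = \<one>\<^bsub>BSG k\<^esub>"
    using \<open>f_alpha (BSG k) x\<close> one unfolding f_alpha_def c_def by blast
  then have "c \<otimes>\<^bsub>BSG k\<^esub> x = x \<otimes>\<^bsub>BSG k\<^esub> c"
    using gcomm_eq_one_iff assms one unfolding c_def by simp
  moreover have "c = (fst x - 1 + of_int k powi (- snd x), snd x)"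
    unfolding c_def using one by (simp add: BSG_inv BSG_mult)
  ultimately have "(of_int k powi (- snd x) - 1) * (of_int k powi (- snd x) - 1) = (0::rat)"
    by (simp add: BSG_mult algebra_simps)
  then have "of_int k powi (- snd x) = (of_int k powi 0 :: rat)"
    by simp
  then show "snd x = 0"
    using power_int_inject_exp[OF one_less_k, of "- snd x" 0] by simp
next
  assume "snd x = 0"
  then obtain X where x: "x = (X, 0)"
    by (cases x) simp
  show "f_alpha (BSG k) x"
    unfolding f_alpha_def
  proof
    fix y assume y: "y \<in> carrier (BSG k)"
    have "inv\<^bsub>BSG k\<^esub> y \<otimes>\<^bsub>BSG k\<^esub> x \<otimes>\<^bsub>BSG k\<^esub> y \<otimes>\<^bsub>BSG k\<^esub> x
        = x \<otimes>\<^bsub>BSG k\<^esub> (inv\<^bsub>BSG k\<^esub> y \<otimes>\<^bsub>BSG k\<^esub> x \<otimes>\<^bsub>BSG k\<^esub> y)"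
      unfolding x conj_A[OF y] by (simp add: BSG_mult)
    then show "gcomm (BSG k) (inv\<^bsub>BSG k\<^esub> y \<otimes>\<^bsub>BSG k\<^esub> x \<otimes>\<^bsub>BSG k\<^esub> y) x = \<one>\<^bsub>BSG k\<^esub>"
      using gcomm_eq_one_iff assms y by simp
  qed
qed

lemma f_beta_iff:
  assumes "y \<in> carrier (BSG k)"
  shows "f_beta (BSG k) k y \<longleftrightarrow> snd y = 1"
proof
  assume "f_beta (BSG k) k y"
  moreover have "(1, 0) \<in> carrier (BSG k)" "f_alpha (BSG k) (1, 0)"
    using f_alpha_iff by (simp_all add: BSG_carrier)
  ultimately have "inv\<^bsub>BSG k\<^esub> y \<otimes>\<^bsub>BSG k\<^esub> (1, 0) \<otimes>\<^bsub>BSG k\<^esub> y = (1, 0) [^]\<^bsub>BSG k\<^esub> k"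
    unfolding f_beta_def by blast
  then have "of_int k powi snd y = (of_int k powi 1 :: rat)"
    unfolding conj_A[OF assms] A_int_pow[OF Zk_1] by simp
  then show "snd y = 1"
    using power_int_inject_exp[OF one_less_k] by blast
next
  assume "snd y = 1"
  show "f_beta (BSG k) k y"
    unfolding f_beta_def
  proof (intro ballI impI)
    fix x assume "x \<in> carrier (BSG k)" "f_alpha (BSG k) x"
    then obtain X where x: "x = (X, 0)" and "X \<in> Zk k"
      using f_alpha_iff by (cases x) (simp add: BSG_carrier)
    then show "inv\<^bsub>BSG k\<^esub> y \<otimes>\<^bsub>BSG k\<^esub> x \<otimes>\<^bsub>BSG k\<^esub> y = x [^]\<^bsub>BSG k\<^esub> k"
      unfolding x conj_A[OF assms] A_int_pow[OF \<open>X \<in> Zk k\<close>] using \<open>snd y = 1\<close> by simp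
  qed
qed

lemma gcomm_int_pow_self:
  assumes "b \<in> carrier (BSG k)"
  shows "gcomm (BSG k) (b [^]\<^bsub>BSG k\<^esub> (n::int)) b = \<one>\<^bsub>BSG k\<^esub>"
  using assms int_pow_mult[OF assms, of n 1] int_pow_mult[OF assms, of 1 n]
  by (simp add: gcomm_eq_one_iff add.commute)

lemma commute_Ab_iff:
  assumes "snd b = 1"
  shows "g \<otimes>\<^bsub>BSG k\<^esub> b = b \<otimes>\<^bsub>BSG k\<^esub> g
    \<longleftrightarrow> fst g * (1 - of_int k powi -1) = fst b * (1 - of_int k powi (- snd g))"
  using assms by (auto simp: BSG_mult prod_eq_iff algebra_simps)

lemma commute_Ab_imp_eq_int_pow:
  assumes b: "b \<in> carrier (BSG k)" "snd b = 1"
    and g: "g \<in> carrier (BSG k)" "gcomm (BSG k) g b = \<one>\<^bsub>BSG k\<^esub>"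
  shows "g = b [^]\<^bsub>BSG k\<^esub> snd g"
proof -
  let ?p = "b [^]\<^bsub>BSG k\<^esub> snd g"
  have "snd ?p = snd g"
    using snd_int_pow b by simp
  moreover have "?p \<otimes>\<^bsub>BSG k\<^esub> b = b \<otimes>\<^bsub>BSG k\<^esub> ?p" "g \<otimes>\<^bsub>BSG k\<^esub> b = b \<otimes>\<^bsub>BSG k\<^esub> g"
    using gcomm_int_pow_self gcomm_eq_one_iff b g by simp_all
  moreover have "of_int k powi -1 \<noteq> (1::rat)"
    using power_int_inject_exp[OF one_less_k, of "-1" 0] by simp
  ultimately have "fst g * (1 - of_int k powi -1) = fst ?p * (1 - of_int k powi -1)"
    unfolding commute_Ab_iff[OF b(2)] by simp
  then have "fst g = fst ?p"
    using \<open>of_int k powi -1 \<noteq> (1::rat)\<close> by simp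
  with \<open>snd ?p = snd g\<close> show ?thesis
    by (simp add: prod_eq_iff)
qed

lemma AbI:
  assumes "b \<in> carrier (BSG k)" "snd b = 1"
  shows "b \<in> Ab k"
proof -
  have "b = aelt (fst b) \<otimes>\<^bsub>BSG k\<^esub> belt"
    using assms(2) by (simp add: aelt_def belt_def BSG_mult prod_eq_iff)
  then show ?thesis
    using assms(1) unfolding Ab_def BSG_carrier by blast
qed

lemma commutator_equation_iff:
  assumes v: "v \<in> carrier (BSG k)" and w: "w \<in> carrier (BSG k)" "snd w = n * snd v"
    and X: "X \<in> Zk k" and Y: "Y \<in> Zk k" and U: "U \<in> Zk k"
    and q: "q = of_int k powi snd v" and Q: "q powi n = 1 + (q - 1) * (of_int n + (q - 1) * Q)"
  shows "gcomm (BSG k) v (Y, 0) = gcomm (BSG k) w (X, 0) \<otimes>\<^bsub>BSG k\<^esub> gcomm (BSG k) v (gcomm (BSG k) (U, 0) v)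
    \<longleftrightarrow> (q - 1) * (Y - of_int n * X) = (q - 1)\<^sup>2 * (X * Q + U)"
proof -
  have "of_int k powi snd w = q powi n"
    unfolding q w(2) by (metis mult.commute power_int_mult)
  have "U * (q - 1) \<in> Zk k"
    using Zk_mult[OF U Zk_diff] two_le_k q by simp
  have "gcomm (BSG k) w (X, 0) = (X * (1 - q powi n), 0)"
    using gcomm_A_right[OF w(1) X] \<open>of_int k powi snd w = q powi n\<close> by simp
  moreover have "gcomm (BSG k) v (gcomm (BSG k) (U, 0) v) = (U * (q - 1) * (1 - q), 0)"
    using gcomm_A_left[OF v U] gcomm_A_right[OF v \<open>U * (q - 1) \<in> Zk k\<close>] q by simp
  moreover have "gcomm (BSG k) v (Y, 0) = (Y * (1 - q), 0)"
    using gcomm_A_right[OF v Y] q by simp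
  ultimately have "gcomm (BSG k) v (Y, 0) = gcomm (BSG k) w (X, 0) \<otimes>\<^bsub>BSG k\<^esub> gcomm (BSG k) v (gcomm (BSG k) (U, 0) v)
      \<longleftrightarrow> Y * (1 - q) - (X * (1 - q powi n) + U * (q - 1) * (1 - q)) = 0"
    by (simp add: BSG_mult)
  also have "Y * (1 - q) - (X * (1 - q powi n) + U * (q - 1) * (1 - q))
      = (q - 1)\<^sup>2 * (X * Q + U) - (q - 1) * (Y - of_int n * X)"
    unfolding Q by (simp add: algebra_simps power2_eq_square)
  finally show ?thesis
    by auto
qed

lemma tau_clause_iff:
  assumes v: "v \<in> carrier (BSG k)" and w: "w \<in> carrier (BSG k)" "snd w = n * snd v"
    and X: "X \<in> Zk k" and Y: "Y \<in> Zk k"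
  defines "q \<equiv> of_int k powi snd v"
  shows "(\<exists>u \<in> carrier (BSG k). f_alpha (BSG k) u \<and>
            gcomm (BSG k) v (Y, 0) = gcomm (BSG k) w (X, 0) \<otimes>\<^bsub>BSG k\<^esub> gcomm (BSG k) v (gcomm (BSG k) u v))
    \<longleftrightarrow> (\<exists>U \<in> Zk k. (q - 1) * (Y - of_int n * X) = (q - 1)\<^sup>2 * U)"
proof -
  have "q \<in> Zk k" "q \<noteq> 0" "inverse q \<in> Zk k"
    using one_less_k Zk_power_int[of k "- snd v"] by (simp_all add: q_def power_int_minus)
  then obtain Q where "Q \<in> Zk k" and Q: "q powi n = 1 + (q - 1) * (of_int n + (q - 1) * Q)"
    using Zk_unit_power_int_expansion[of k q n] two_le_k by auto
  note equation_iff = commutator_equation_iff[OF v w X Y _ meta_eq_to_obj_eq[OF q_def] Q]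
  show ?thesis
  proof
    assume "\<exists>u \<in> carrier (BSG k). f_alpha (BSG k) u \<and>
      gcomm (BSG k) v (Y, 0) = gcomm (BSG k) w (X, 0) \<otimes>\<^bsub>BSG k\<^esub> gcomm (BSG k) v (gcomm (BSG k) u v)"
    then obtain U where "U \<in> Zk k"
      and "gcomm (BSG k) v (Y, 0) = gcomm (BSG k) w (X, 0) \<otimes>\<^bsub>BSG k\<^esub> gcomm (BSG k) v (gcomm (BSG k) (U, 0) v)"
      by (metis BSG_carrier f_alpha_iff prod.collapse)
    moreover have "X * Q + U \<in> Zk k"
      using Zk_add Zk_mult X \<open>Q \<in> Zk k\<close> \<open>U \<in> Zk k\<close> two_le_k by simp
    ultimately show "\<exists>U \<in> Zk k. (q - 1) * (Y - of_int n * X) = (q - 1)\<^sup>2 * U"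
      using equation_iff by blast
  next
    assume "\<exists>U \<in> Zk k. (q - 1) * (Y - of_int n * X) = (q - 1)\<^sup>2 * U"
    then obtain U where "U \<in> Zk k" "(q - 1) * (Y - of_int n * X) = (q - 1)\<^sup>2 * U"
      by blast
    moreover have "U - X * Q \<in> Zk k"
      using Zk_diff Zk_mult X \<open>Q \<in> Zk k\<close> \<open>U \<in> Zk k\<close> two_le_k by simp
    ultimately show "\<exists>u \<in> carrier (BSG k). f_alpha (BSG k) u \<and>
      gcomm (BSG k) v (Y, 0) = gcomm (BSG k) w (X, 0) \<otimes>\<^bsub>BSG k\<^esub> gcomm (BSG k) v (gcomm (BSG k) u v)"
      using equation_iff[of "U - X * Q"] f_alpha_iff[of "(U - X * Q, 0)"]
      by (intro bexI[of _ "(U - X * Q, 0)"]) (simp_all add: BSG_carrier)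
  qed
qed

lemma f_tauD:
  assumes gamma: "\<And>n l m :: int. \<gamma> (b [^]\<^bsub>BSG k\<^esub> n) (b [^]\<^bsub>BSG k\<^esub> l) (b [^]\<^bsub>BSG k\<^esub> m) b \<longleftrightarrow> n * l = m"
    and b: "b \<in> carrier (BSG k)"
    and x: "x \<in> carrier (BSG k)" and Y: "Y \<in> Zk k"
    and tau: "f_tau (BSG k) k \<gamma> x (Y, 0) (b [^]\<^bsub>BSG k\<^esub> n) b"
  shows "snd x = 0 \<and> Y = of_int n * fst x"
proof -
  have "snd x = 0"
    using tau f_alpha_iff x unfolding f_tau_def by blast
  then obtain X where x_eq: "x = (X, 0)" and X: "X \<in> Zk k"
    using x by (cases x) (simp add: BSG_carrier)
  have "\<exists>U \<in> Zk k. Y - of_int n * X = (of_int k ^ l - 1) * U" if "1 \<le> l" for l :: nat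
  proof -
    define v where "v = b [^]\<^bsub>BSG k\<^esub> int l"
    define w where "w = b [^]\<^bsub>BSG k\<^esub> (n * int l)"
    have v: "v \<in> carrier (BSG k)" "snd v = int l" and w: "w \<in> carrier (BSG k)" "snd w = n * snd v"
      using b snd_int_pow tau unfolding f_tau_def f_beta_iff[OF b] by (simp_all add: v_def w_def)
    have "gcomm (BSG k) v b = \<one>\<^bsub>BSG k\<^esub>" "gcomm (BSG k) w b = \<one>\<^bsub>BSG k\<^esub>"
        "\<gamma> (b [^]\<^bsub>BSG k\<^esub> n) v w b"
      using gcomm_int_pow_self b gamma by (simp_all add: v_def w_def)
    with tau v w obtain U where "U \<in> Zk k"
      and "(of_int k ^ l - 1) * (Y - of_int n * X) = (of_int k ^ l - 1)\<^sup>2 * U"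
      using tau_clause_iff[OF v(1) w X Y] unfolding f_tau_def x_eq by auto
    moreover have "of_int k ^ l \<noteq> (1::rat)"
      using one_less_power[OF one_less_k, of l] \<open>1 \<le> l\<close> by simp
    ultimately show ?thesis
      by (auto simp: power2_eq_square)
  qed
  moreover have "Y - of_int n * X \<in> Zk k"
    using Zk_diff Zk_mult X Y two_le_k by simp
  ultimately have "Y - of_int n * X = 0"
    using Zk_eq_0_if_divisible_by_all_pow_minus_1 two_le_k by blast
  with \<open>snd x = 0\<close> show ?thesis
    using x_eq by simp
qed

lemma f_tauI:
  assumes gamma: "\<And>n l m :: int. \<gamma> (b [^]\<^bsub>BSG k\<^esub> n) (b [^]\<^bsub>BSG k\<^esub> l) (b [^]\<^bsub>BSG k\<^esub> m) b \<longleftrightarrow> n * l = m"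
    and b: "b \<in> carrier (BSG k)" "snd b = 1"
    and X: "X \<in> Zk k"
  shows "f_tau (BSG k) k \<gamma> (X, 0) (of_int n * X, 0) (b [^]\<^bsub>BSG k\<^esub> n) b"
proof -
  have "\<exists>u \<in> carrier (BSG k). f_alpha (BSG k) u \<and>
      gcomm (BSG k) v (of_int n * X, 0) = gcomm (BSG k) w (X, 0) \<otimes>\<^bsub>BSG k\<^esub> gcomm (BSG k) v (gcomm (BSG k) u v)"
    if "v \<in> carrier (BSG k)" "w \<in> carrier (BSG k)" "gcomm (BSG k) v b = \<one>\<^bsub>BSG k\<^esub>"
      "gcomm (BSG k) w b = \<one>\<^bsub>BSG k\<^esub>" "\<gamma> (b [^]\<^bsub>BSG k\<^esub> n) v w b" for v w
  proof -
    have "v = b [^]\<^bsub>BSG k\<^esub> snd v" "w = b [^]\<^bsub>BSG k\<^esub> snd w"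
      using commute_Ab_imp_eq_int_pow b that(1-4) by blast+
    then have "snd w = n * snd v"
      using gamma that(5) by metis
    moreover have "\<exists>U \<in> Zk k. (q - 1) * (of_int n * X - of_int n * X) = (q - 1)\<^sup>2 * U" for q
      by (rule bexI[of _ 0]) simp_all
    ultimately show ?thesis
      using tau_clause_iff[OF that(1,2) _ X Zk_mult[OF Zk_of_int X]] by blast
  qed
  moreover have "f_alpha (BSG k) (X, 0)" "f_alpha (BSG k) (of_int n * X, 0)"
    using f_alpha_iff X Zk_mult[OF Zk_of_int X] by (simp_all add: BSG_carrier)
  moreover have "gcomm (BSG k) (b [^]\<^bsub>BSG k\<^esub> n) b = \<one>\<^bsub>BSG k\<^esub>" "f_beta (BSG k) k b"
    using gcomm_int_pow_self f_beta_iff b by simp_all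
  ultimately show ?thesis
    unfolding f_tau_def by blast
qed

lemma f_pi_witness_iff:
  assumes gamma: "\<forall>b \<in> Ab k. \<forall>n l m :: int.
      \<gamma> (b [^]\<^bsub>BSG k\<^esub> n) (b [^]\<^bsub>BSG k\<^esub> l) (b [^]\<^bsub>BSG k\<^esub> m) b \<longleftrightarrow> n * l = m"
    and v: "v \<in> carrier (BSG k)" "snd v = 1"
    and x: "x \<in> carrier (BSG k)" and C: "C \<in> Zk k"
  shows "(\<exists>w \<in> carrier (BSG k). \<exists>h \<in> carrier (BSG k). gcomm (BSG k) w v = \<one>\<^bsub>BSG k\<^esub> \<and>
            f_tau (BSG k) k \<gamma> x (inv\<^bsub>BSG k\<^esub> w \<otimes>\<^bsub>BSG k\<^esub> (C, 0) \<otimes>\<^bsub>BSG k\<^esub> w) h v)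
    \<longleftrightarrow> snd x = 0 \<and> (\<exists>i n. C * of_int k powi i = of_int n * fst x)"
proof
  assume "\<exists>w \<in> carrier (BSG k). \<exists>h \<in> carrier (BSG k). gcomm (BSG k) w v = \<one>\<^bsub>BSG k\<^esub> \<and>
    f_tau (BSG k) k \<gamma> x (inv\<^bsub>BSG k\<^esub> w \<otimes>\<^bsub>BSG k\<^esub> (C, 0) \<otimes>\<^bsub>BSG k\<^esub> w) h v"
  then obtain w h where "h \<in> carrier (BSG k)"
    and tau: "f_tau (BSG k) k \<gamma> x (C * of_int k powi snd w, 0) h v"
    using conj_A by auto
  moreover have "h = v [^]\<^bsub>BSG k\<^esub> snd h"
    using commute_Ab_imp_eq_int_pow v \<open>h \<in> carrier (BSG k)\<close> tau unfolding f_tau_def by blast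
  ultimately have "snd x = 0 \<and> C * of_int k powi snd w = of_int (snd h) * fst x"
    using f_tauD[of \<gamma> v] gamma AbI[OF v] v x C Zk_mult by (metis Zk_power_int)
  then show "snd x = 0 \<and> (\<exists>i n. C * of_int k powi i = of_int n * fst x)"
    by blast
next
  assume "snd x = 0 \<and> (\<exists>i n. C * of_int k powi i = of_int n * fst x)"
  then obtain i n X where x_eq: "x = (X, 0)" and "C * of_int k powi i = of_int n * X"
    by (cases x) auto
  then have "inv\<^bsub>BSG k\<^esub> (v [^]\<^bsub>BSG k\<^esub> i) \<otimes>\<^bsub>BSG k\<^esub> (C, 0) \<otimes>\<^bsub>BSG k\<^esub> v [^]\<^bsub>BSG k\<^esub> i = (of_int n * X, 0)"
    using conj_A[OF int_pow_closed[OF v(1)]] snd_int_pow v by simp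
  moreover have "f_tau (BSG k) k \<gamma> (X, 0) (of_int n * X, 0) (v [^]\<^bsub>BSG k\<^esub> n) v"
    using f_tauI gamma AbI[OF v] v x x_eq by (simp add: BSG_carrier)
  ultimately have "f_tau (BSG k) k \<gamma> x
      (inv\<^bsub>BSG k\<^esub> (v [^]\<^bsub>BSG k\<^esub> i) \<otimes>\<^bsub>BSG k\<^esub> (C, 0) \<otimes>\<^bsub>BSG k\<^esub> v [^]\<^bsub>BSG k\<^esub> i) (v [^]\<^bsub>BSG k\<^esub> n) v"
    using x_eq by simp
  then show "\<exists>w \<in> carrier (BSG k). \<exists>h \<in> carrier (BSG k). gcomm (BSG k) w v = \<one>\<^bsub>BSG k\<^esub> \<and>
    f_tau (BSG k) k \<gamma> x (inv\<^bsub>BSG k\<^esub> w \<otimes>\<^bsub>BSG k\<^esub> (C, 0) \<otimes>\<^bsub>BSG k\<^esub> w) h v"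
    using gcomm_int_pow_self v by blast
qed

lemma f_pi_iff:
  assumes gamma: "\<forall>b \<in> Ab k. \<forall>n l m :: int.
      \<gamma> (b [^]\<^bsub>BSG k\<^esub> n) (b [^]\<^bsub>BSG k\<^esub> l) (b [^]\<^bsub>BSG k\<^esub> m) b \<longleftrightarrow> n * l = m"
    and x: "x \<in> carrier (BSG k)"
  shows "f_pi (BSG k) k \<gamma> x \<longleftrightarrow> snd x = 0 \<and> (\<forall>C \<in> Zk k. \<exists>i n. C * of_int k powi i = of_int n * fst x)"
proof
  assume pi: "f_pi (BSG k) k \<gamma> x"
  have "(0, 1) \<in> carrier (BSG k)" "f_beta (BSG k) k (0, 1)"
    using f_beta_iff by (simp_all add: BSG_carrier)
  moreover have "(C, 0) \<in> carrier (BSG k)" "f_alpha (BSG k) (C, 0)" if "C \<in> Zk k" for C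
    using f_alpha_iff that by (simp_all add: BSG_carrier)
  ultimately have "snd x = 0 \<and> (\<exists>i n. C * of_int k powi i = of_int n * fst x)" if "C \<in> Zk k" for C
    using pi f_pi_witness_iff[OF gamma _ _ x that, of "(0, 1)"] that unfolding f_pi_def by auto
  then show "snd x = 0 \<and> (\<forall>C \<in> Zk k. \<exists>i n. C * of_int k powi i = of_int n * fst x)"
    using Zk_0 by blast
next
  assume rhs: "snd x = 0 \<and> (\<forall>C \<in> Zk k. \<exists>i n. C * of_int k powi i = of_int n * fst x)"
  show "f_pi (BSG k) k \<gamma> x"
    unfolding f_pi_def
  proof (intro ballI impI)
    fix c v
    assume "c \<in> carrier (BSG k)" "v \<in> carrier (BSG k)" "f_alpha (BSG k) c \<and> f_beta (BSG k) k v"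
    moreover obtain C m where "c = (C, m)"
      by (cases c)
    ultimately have "c = (C, 0)" "C \<in> Zk k" "snd v = 1"
      using f_alpha_iff f_beta_iff by (simp_all add: BSG_carrier)
    then show "\<exists>w \<in> carrier (BSG k). \<exists>h \<in> carrier (BSG k). gcomm (BSG k) w v = \<one>\<^bsub>BSG k\<^esub> \<and>
        f_tau (BSG k) k \<gamma> x (inv\<^bsub>BSG k\<^esub> w \<otimes>\<^bsub>BSG k\<^esub> c \<otimes>\<^bsub>BSG k\<^esub> w) h v"
      using f_pi_witness_iff[OF gamma \<open>v \<in> carrier (BSG k)\<close> _ x] rhs by simp
  qed
qed

end

theorem lemma4p10:
  fixes k :: int and \<gamma> :: "rat \<times> int \<Rightarrow> rat \<times> int \<Rightarrow> rat \<times> int \<Rightarrow> rat \<times> int \<Rightarrow> bool"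
  assumes "k \<ge> 2"
    and "\<forall>b1 \<in> Ab k. \<forall>n l m :: int.
           \<gamma> (b1 [^]\<^bsub>BSG k\<^esub> n) (b1 [^]\<^bsub>BSG k\<^esub> l) (b1 [^]\<^bsub>BSG k\<^esub> m) b1 \<longleftrightarrow> n * l = m"
  shows "{x \<in> carrier (BSG k). f_pi (BSG k) k \<gamma> x} = A1 k"
proof -
  interpret baumslag_solitar k
    using assms(1) by unfold_locales
  have "x \<in> carrier (BSG k) \<and> f_pi (BSG k) k \<gamma> x \<longleftrightarrow> x \<in> A1 k" for x
  proof (cases x)
    case (Pair X m)
    then show ?thesis
      using f_pi_iff[OF assms(2)] Zk_unit_iff_multiples[of k X] assms(1)
      by (auto simp: A1_def aelt_def BSG_carrier)
  qed
  then show ?thesis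
    by blast
qed

end
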